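(* There is a deterministic distributed algorithm in the CONGEST model which, given an $n$-vertex graph $G=(V,E,w)$ with positive edge weights and a parameter $\epsilon\in(0,1)$, computes a weighted $\epsilon$-defective coloring of $G$ using $O(\epsilon^{-2})$ colors, in $O(\log^* n)$ communication rounds.
   Context: CONGEST model: the network is the graph $G$, vertices have unique identifiers from $\{1,\dots,n\}$ and are processors, and in each synchronous round every vertex sends a message of $O(\log n)$ bits to each neighbour; complexity is the number of rounds. For a coloring $\varphi:V\to[c]$ of a positively edge-weighted graph, let $E_m(v)$ be the set of monochromatic edges at $v$ (edges $(u,v)$ with $\varphi(u)=\varphi(v)$), $defect_w(v)=\sum_{e\in E_m(v)}w(e)$ and $w(v)=\sum_{e\ni v}w(e)$. The coloring is a weighted $\epsilon$-defective coloring if $defect_w(v)\le \epsilon\, w(v)$ for every $v\in V$. *)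

theory Defs
  imports Complex_Main
begin

definition log_star :: "nat \<Rightarrow> nat" where
  "log_star n = (LEAST i. ((\<lambda>x. log 2 x) ^^ i) (real n) \<le> 1)"

text \<open>An n-vertex graph with positive edge weights on vertex set {1..n}, given by a
  symmetric weight function: u,v adjacent iff w u v > 0; no self-loops; weight 0 means
  non-edge.\<close>
definition weighted_graph :: "nat \<Rightarrow> (nat \<Rightarrow> nat \<Rightarrow> real) \<Rightarrow> bool" where
  "weighted_graph n w \<longleftrightarrow>
     (\<forall>u v. w u v = w v u) \<and> (\<forall>u v. 0 \<le> w u v) \<and> (\<forall>v. w v v = 0) \<and>
     (\<forall>u v. w u v \<noteq> 0 \<longrightarrow> u \<in> {1..n} \<and> v \<in> {1..n})"

definition wdeg :: "nat \<Rightarrow> (nat \<Rightarrow> nat \<Rightarrow> real) \<Rightarrow> nat \<Rightarrow> real" where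
  "wdeg n w v = (\<Sum>u\<in>{1..n}. w v u)"

definition wdefect :: "nat \<Rightarrow> (nat \<Rightarrow> nat \<Rightarrow> real) \<Rightarrow> (nat \<Rightarrow> nat) \<Rightarrow> nat \<Rightarrow> real" where
  "wdefect n w \<phi> v = (\<Sum>u\<in>{u\<in>{1..n}. \<phi> u = \<phi> v}. w v u)"

definition weighted_defective_coloring ::
  "nat \<Rightarrow> (nat \<Rightarrow> nat \<Rightarrow> real) \<Rightarrow> real \<Rightarrow> (nat \<Rightarrow> nat) \<Rightarrow> bool" where
  "weighted_defective_coloring n w \<epsilon> \<phi> \<longleftrightarrow>
     (\<forall>v\<in>{1..n}. wdefect n w \<phi> v \<le> \<epsilon> * wdeg n w v)"

text \<open>In each round, vertex u sends to neighbour v the message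
  send n eps (state of u) v (a natural number); v then updates its state from its old
  state and the received messages (indexed by sender; non-neighbours contribute 0).\<close>
primrec congest_state ::
  "(nat \<Rightarrow> real \<Rightarrow> nat \<Rightarrow> (nat \<Rightarrow> real) \<Rightarrow> 's) \<Rightarrow>
   (nat \<Rightarrow> real \<Rightarrow> 's \<Rightarrow> nat \<Rightarrow> nat) \<Rightarrow>
   (nat \<Rightarrow> real \<Rightarrow> 's \<Rightarrow> (nat \<Rightarrow> nat) \<Rightarrow> 's) \<Rightarrow>
   nat \<Rightarrow> real \<Rightarrow> (nat \<Rightarrow> nat \<Rightarrow> real) \<Rightarrow> nat \<Rightarrow> nat \<Rightarrow> 's" where
  "congest_state init send upd n \<epsilon> w 0 v = init n \<epsilon> v (\<lambda>u. w v u)"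
| "congest_state init send upd n \<epsilon> w (Suc t) v =
     upd n \<epsilon> (congest_state init send upd n \<epsilon> w t v)
       (\<lambda>u. if 0 < w u v then send n \<epsilon> (congest_state init send upd n \<epsilon> w t u) v else 0)"

end

theory Submission
  imports Defs "HOL-Computational_Algebra.Computational_Algebra" "HOL-Library.Log_Nat"
begin

text \<open>
  Start from the identifiers as colours, with b = \<lceil>log2 (n + 1)\<rceil> bits. In one round a
  vertex v reads its colour as a polynomial of degree below b over \<int>/q, where q > 4 b^2/\<epsilon> is
  prime, and recolours itself by a pair (a, value at a). Two distinct polynomials agree in at most
  b - 1 points, so by averaging some point a makes the weight of the differently coloured
  neighbours that collide with v at most (b - 1)/q \<le> \<epsilon>/(4 b) of the weighted degree of v.
  The new colours have O(log b + log (1/\<epsilon>)) bits, so after O(log* n) rounds only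
  O(log (1/\<epsilon>)) bits remain, and one last round with a prime q = \<Theta>(1/\<epsilon>) and degree 1023
  leaves O(1/\<epsilon>^2) colours. Since the bit length at least halves in every round, the defects
  \<epsilon>/(4 b) form a geometric series bounded by \<epsilon>. The primes come from a weak Bertrand
  postulate, a prime in (m, 2^20 m], proved by Chebyshev's estimates for the central binomial
  coefficient.
\<close>

section \<open>A weak Bertrand postulate\<close>

lemma multiplicity_eq_card_prime_power_dvd:
  fixes p x :: nat
  assumes p: "prime p" and x: "x > 0" and k: "multiplicity p x \<le> k"
  shows "multiplicity p x = card {i \<in> {1..k}. p ^ i dvd x}"
proof -
  have dvd_iff: "p ^ i dvd x \<longleftrightarrow> i \<le> multiplicity p x" for i
    using x p by (intro power_dvd_iff_le_multiplicity) auto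
  have "{i \<in> {1..k}. p ^ i dvd x} = {1..multiplicity p x}"
    unfolding dvd_iff using k by auto
  then show ?thesis by simp
qed

lemma multiplicity_prime_fact:
  fixes p :: nat
  assumes p: "prime p"
  shows "multiplicity p (fact m :: nat) = (\<Sum>i\<in>{1..m}. m div p ^ i)"
proof (induction m)
  case 0
  then show ?case by simp
next
  case (Suc m)
  have pow: "k < p ^ k" for k
    using prime_gt_1_nat[OF p] by (intro power_gt_expt) simp
  have "\<not> p ^ Suc m dvd Suc m"
    using pow[of "Suc m"] by (auto dest: dvd_imp_le)
  then have "multiplicity p (Suc m) < Suc m"
    using p by (intro multiplicity_lessI) auto
  then have "multiplicity p (Suc m) = card {i \<in> {1..Suc m}. p ^ i dvd Suc m}"
    by (intro multiplicity_eq_card_prime_power_dvd[OF p]) auto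
  also have "\<dots> = (\<Sum>i\<in>{1..Suc m}. if p ^ i dvd Suc m then 1 else 0)"
    by (simp only: card_eq_sum sum.inter_filter[OF finite_atLeastAtMost])
  finally have multiplicity_Suc: "multiplicity p (Suc m) = \<dots>" .
  have "m div p ^ Suc m = 0"
    using pow[of "Suc m"] by simp
  then have fact_m: "multiplicity p (fact m :: nat) = (\<Sum>i\<in>{1..Suc m}. m div p ^ i)"
    using Suc by simp
  have "Suc m div p ^ i = (if p ^ i dvd Suc m then 1 else 0) + m div p ^ i" for i
    using p by (simp add: div_Suc dvd_eq_mod_eq_0 prime_gt_0_nat)
  then have "(\<Sum>i\<in>{1..Suc m}. Suc m div p ^ i)
      = (\<Sum>i\<in>{1..Suc m}. if p ^ i dvd Suc m then 1 else 0) + (\<Sum>i\<in>{1..Suc m}. m div p ^ i)"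
    by (simp only: sum.distrib)
  moreover have "multiplicity p (fact (Suc m) :: nat) = multiplicity p (Suc m) + multiplicity p (fact m :: nat)"
    unfolding fact_Suc of_nat_id using p by (intro prime_elem_multiplicity_mult_distrib) auto
  ultimately show ?case
    using multiplicity_Suc fact_m by simp
qed

lemma double_div_le:
  fixes N k :: nat
  assumes "k > 0"
  shows "2 * (N div k) \<le> 2 * N div k" and "2 * N div k \<le> 2 * (N div k) + 1"
proof -
  show "2 * (N div k) \<le> 2 * N div k"
    using assms by (simp add: less_eq_div_iff_mult_less_eq)
  have "(2 * (N div k) + 2) * k = 2 * (N div k * k) + 2 * k"
    by (simp add: algebra_simps)
  then have "2 * N < (2 * (N div k) + 2) * k"
    using div_mult_mod_eq[of N k] mod_less_divisor[OF assms, of N] by linarith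
  then have "2 * N div k < 2 * (N div k) + 2"
    using div_less_iff_less_mult[OF assms] by blast
  then show "2 * N div k \<le> 2 * (N div k) + 1"
    by linarith
qed

lemma multiplicity_central_binomial:
  fixes p N :: nat
  assumes p: "prime p"
  shows "multiplicity p ((2 * N) choose N) = (\<Sum>i\<in>{1..2 * N}. 2 * N div p ^ i - 2 * (N div p ^ i))"
proof -
  have pos: "0 < p ^ i" for i
    using p by (simp add: prime_gt_0_nat)
  let ?S = "\<lambda>M. \<Sum>i\<in>{1..2 * N}. M div p ^ i"
  have "fact (2 * N) = ((2 * N) choose N) * fact N * (fact N :: nat)"
    using binomial_fact_lemma[of N "2 * N"] by (simp add: mult_2 algebra_simps)
  then have "multiplicity p (fact (2 * N) :: nat)
      = multiplicity p ((2 * N) choose N) + 2 * multiplicity p (fact N :: nat)"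
    using p by (simp add: prime_elem_multiplicity_mult_distrib)
  moreover have "(\<Sum>i\<in>{1..N}. N div p ^ i) = ?S N"
  proof (rule sum.mono_neutral_left)
    show "\<forall>i\<in>{1..2 * N} - {1..N}. N div p ^ i = 0"
      using prime_gt_1_nat[OF p] by (auto intro!: div_less less_trans[OF _ power_gt_expt])
  qed auto
  ultimately have split: "?S (2 * N) = multiplicity p ((2 * N) choose N) + 2 * ?S N"
    by (simp add: multiplicity_prime_fact[OF p])
  have "(\<Sum>i\<in>{1..2 * N}. 2 * N div p ^ i - 2 * (N div p ^ i))
      = ?S (2 * N) - (\<Sum>i\<in>{1..2 * N}. 2 * (N div p ^ i))"
    by (rule sum_subtractf_nat) (use double_div_le(1)[OF pos] in auto)
  then show ?thesis
    using split by (simp add: sum_distrib_left)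
qed

lemma prime_power_multiplicity_central_binomial_le:
  fixes p N :: nat
  assumes p: "prime p" and N: "N > 0"
  shows "p ^ multiplicity p ((2 * N) choose N) \<le> 2 * N"
proof (rule ccontr)
  let ?e = "multiplicity p ((2 * N) choose N)"
  assume "\<not> ?thesis"
  then have big: "2 * N < p ^ ?e" by simp
  have pos: "0 < p ^ i" for i
    using p by (simp add: prime_gt_0_nat)
  have "2 * N div p ^ i - 2 * (N div p ^ i) \<le> (if p ^ i \<le> 2 * N then 1 else 0)" for i
    using double_div_le(2)[OF pos, of N i] by auto
  then have "?e \<le> (\<Sum>i\<in>{1..2 * N}. if p ^ i \<le> 2 * N then 1 else 0)"
    unfolding multiplicity_central_binomial[OF p] by (rule sum_mono)
  also have "\<dots> = card {i \<in> {1..2 * N}. p ^ i \<le> 2 * N}"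
    by (simp only: card_eq_sum sum.inter_filter[OF finite_atLeastAtMost])
  also have "\<dots> \<le> card {1..?e - 1}"
  proof (rule card_mono)
    show "{i \<in> {1..2 * N}. p ^ i \<le> 2 * N} \<subseteq> {1..?e - 1}"
    proof
      fix i assume i: "i \<in> {i \<in> {1..2 * N}. p ^ i \<le> 2 * N}"
      then have "p ^ i < p ^ ?e"
        using big by simp
      then have "i < ?e"
        using prime_gt_1_nat[OF p] power_less_imp_less_exp by blast
      then show "i \<in> {1..?e - 1}"
        using i by simp
    qed
  qed simp
  finally have "?e \<le> ?e - 1" by simp
  moreover have "?e > 0"
    using big N by (cases ?e) auto
  ultimately show False by simp
qed

lemma prod_distinct_primes_dvd:
  fixes x :: nat
  assumes "finite S" and "\<forall>p\<in>S. prime p \<and> p dvd x"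
  shows "\<Prod>S dvd x"
  using assms
proof (induction S rule: finite_induct)
  case empty
  then show ?case by simp
next
  case (insert p S)
  have "\<not> p dvd \<Prod>S"
  proof
    assume "p dvd \<Prod>S"
    then obtain q where "q \<in> S" "p dvd q"
      using insert prime_dvd_prod_iff[of S p id] by auto
    then show False
      using insert primes_dvd_imp_eq by blast
  qed
  then have "coprime p (\<Prod>S)"
    using insert by (intro prime_imp_coprime) auto
  then show ?case
    using insert by (simp add: divides_mult)
qed

lemma binomial_odd_middle_le_four_power: "(2 * m + 1) choose m \<le> 4 ^ m"
proof -
  have "2 * ((2 * m + 1) choose m) = ((2 * m + 1) choose m) + ((2 * m + 1) choose (m + 1))"
    using binomial_symmetric[of m "2 * m + 1"] by simp
  also have "\<dots> = (\<Sum>k\<in>{m, m + 1}. (2 * m + 1) choose k)"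
    by simp
  also have "\<dots> \<le> (\<Sum>k\<le>2 * m + 1. (2 * m + 1) choose k)"
    by (intro sum_mono2) auto
  also have "\<dots> = 2 ^ (2 * m + 1)"
    by (rule choose_row_sum)
  also have "\<dots> = 2 * 4 ^ m"
    by (simp add: power_mult)
  finally show ?thesis by simp
qed

lemma prime_dvd_binomial_odd_middle:
  assumes p: "prime p" and "m + 1 < p" and "p \<le> 2 * m + 1"
  shows "p dvd (2 * m + 1) choose m"
proof -
  have "fact (2 * m + 1) = ((2 * m + 1) choose m) * (fact m * (fact (m + 1) :: nat))"
    using binomial_fact_lemma[of m "2 * m + 1"] by (simp add: algebra_simps)
  moreover have "p dvd (fact (2 * m + 1) :: nat)"
    using assms prime_dvd_fact_iff by blast
  moreover have "\<not> p dvd (fact m :: nat)"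
    using prime_dvd_fact_iff[OF p, of m] assms(2) by linarith
  moreover have "\<not> p dvd (fact (m + 1) :: nat)"
    using prime_dvd_fact_iff[OF p, of "m + 1"] assms(2) by linarith
  ultimately show ?thesis
    using p prime_dvd_mult_iff by metis
qed

lemma finite_primes_le: "finite {p :: nat. prime p \<and> p \<le> n}"
  by (rule finite_subset[of _ "{..n}"]) auto

lemma finite_primes_between: "finite {p :: nat. prime p \<and> m < p \<and> p \<le> n}"
  by (rule finite_subset[OF _ finite_primes_le[of n]]) auto

lemma prod_primes_between_le_four_power:
  "\<Prod>{p :: nat. prime p \<and> m + 1 < p \<and> p \<le> 2 * m + 1} \<le> 4 ^ m"
proof -
  have "\<Prod>{p :: nat. prime p \<and> m + 1 < p \<and> p \<le> 2 * m + 1} dvd (2 * m + 1) choose m"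
    using prime_dvd_binomial_odd_middle by (intro prod_distinct_primes_dvd finite_primes_between) auto
  then have "\<Prod>{p :: nat. prime p \<and> m + 1 < p \<and> p \<le> 2 * m + 1} \<le> (2 * m + 1) choose m"
    by (rule dvd_imp_le) simp
  then show ?thesis
    using binomial_odd_middle_le_four_power order_trans by blast
qed

lemma primorial_le_four_power: "\<Prod>{p :: nat. prime p \<and> p \<le> n} \<le> 4 ^ n"
proof (induction n rule: less_induct)
  case (less n)
  consider "n \<le> 1" | "n = 2" | "n > 2" "even n" | m where "n = 2 * m + 1" "m \<ge> 1"
  proof (cases "even n")
    case False
    then obtain m where "n = 2 * m + 1"
      using oddE by blast
    then show ?thesis
      using that by (cases "m = 0") auto
  qed (use that in linarith)
  then show ?case
  proof cases
    case 1
    then have none: "{p :: nat. prime p \<and> p \<le> n} = {}"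
      by (auto dest: prime_ge_2_nat)
    show ?thesis
      unfolding none by simp
  next
    case 2
    then have two: "{p :: nat. prime p \<and> p \<le> n} = {2}"
      by (auto dest: prime_ge_2_nat)
    show ?thesis
      unfolding two using 2 by simp
  next
    case 3
    then have "\<not> prime n"
      using prime_odd_nat[of n] by auto
    then have "{p :: nat. prime p \<and> p \<le> n} = {p. prime p \<and> p \<le> n - 1}"
      by (intro Collect_cong) (auto simp: le_less)
    then have "\<Prod>{p :: nat. prime p \<and> p \<le> n} \<le> 4 ^ (n - 1)"
      using less[of "n - 1"] 3 by simp
    also have "\<dots> \<le> 4 ^ n"
      by (intro power_increasing) auto
    finally show ?thesis .
  next
    case 4
    let ?Small = "{p :: nat. prime p \<and> p \<le> m + 1}"
    let ?Large = "{p :: nat. prime p \<and> m + 1 < p \<and> p \<le> 2 * m + 1}"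
    have split: "{p :: nat. prime p \<and> p \<le> n} = ?Small \<union> ?Large"
      using 4 by auto
    have "\<Prod>{p :: nat. prime p \<and> p \<le> n} = \<Prod>?Small * \<Prod>?Large"
      unfolding split by (rule prod.union_disjoint[OF finite_primes_le finite_primes_between]) auto
    also have "\<dots> \<le> 4 ^ (m + 1) * 4 ^ m"
      using 4 less[of "m + 1"] prod_primes_between_le_four_power[of m] by (intro mult_le_mono) simp_all
    also have "\<dots> = 4 ^ n"
      using 4 by (simp add: power_add[symmetric])
    finally show ?thesis .
  qed
qed

lemma card_le_floor_sqrt:
  fixes S :: "nat set"
  assumes "\<forall>p\<in>S. 0 < p \<and> p * p \<le> X"
  shows "card S \<le> nat \<lfloor>sqrt X\<rfloor>"
proof -
  have "S \<subseteq> {1..nat \<lfloor>sqrt X\<rfloor>}"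
  proof
    fix p assume "p \<in> S"
    then have "0 < p" and "real p * real p \<le> real X"
      using assms by (auto simp flip: of_nat_mult)
    then have "1 \<le> p" and "real p \<le> sqrt X"
      by (auto simp: real_le_rsqrt power2_eq_square)
    then show "p \<in> {1..nat \<lfloor>sqrt X\<rfloor>}"
      by (simp add: le_nat_floor)
  qed
  then show ?thesis
    using card_mono[of "{1..nat \<lfloor>sqrt X\<rfloor>}" S] by simp
qed

lemma multiplicity_central_binomial_le_one:
  fixes p N :: nat
  assumes p: "prime p" and N: "N > 0" and large: "2 * N < p * p"
  shows "multiplicity p ((2 * N) choose N) \<le> 1"
proof (rule ccontr)
  assume "\<not> ?thesis"
  then have "p ^ 2 \<le> p ^ multiplicity p ((2 * N) choose N)"
    using prime_gt_0_nat[OF p] by (intro power_increasing) auto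
  then show False
    using prime_power_multiplicity_central_binomial_le[OF p N] large by (simp add: power2_eq_square)
qed

lemma central_binomial_le_if_prime_factors_le:
  fixes N n :: nat
  assumes N: "N > 0" and factors: "\<And>p. p \<in> prime_factors ((2 * N) choose N) \<Longrightarrow> p \<le> n"
  shows "(2 * N) choose N \<le> (2 * N) ^ nat \<lfloor>sqrt (2 * N)\<rfloor> * 4 ^ n"
proof -
  let ?C = "(2 * N) choose N" and ?k = "nat \<lfloor>sqrt (2 * N)\<rfloor>"
  let ?P = "prime_factors ?C"
  define Small where "Small = {p \<in> ?P. p * p \<le> 2 * N}"
  define Large where "Large = {p \<in> ?P. \<not> p * p \<le> 2 * N}"
  have "?C = (\<Prod>p\<in>?P. p ^ multiplicity p ?C)"
    using prime_factorization_nat[of ?C] by simp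
  also have "?P = Small \<union> Large"
    unfolding Small_def Large_def by auto
  also have "(\<Prod>p\<in>Small \<union> Large. p ^ multiplicity p ?C)
      = (\<Prod>p\<in>Small. p ^ multiplicity p ?C) * (\<Prod>p\<in>Large. p ^ multiplicity p ?C)"
    by (rule prod.union_disjoint) (auto simp: Small_def Large_def)
  also have "\<dots> \<le> (2 * N) ^ ?k * 4 ^ n"
  proof (rule mult_le_mono)
    have "(\<Prod>p\<in>Small. p ^ multiplicity p ?C) \<le> (2 * N) ^ card Small"
      using prime_power_multiplicity_central_binomial_le N unfolding Small_def
      by (intro prod_le_power) auto
    also have "\<dots> \<le> (2 * N) ^ ?k"
    proof (rule power_increasing)
      show "card Small \<le> ?k"
        by (rule card_le_floor_sqrt) (auto simp: Small_def prime_gt_0_nat in_prime_factors_iff)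
    qed (use N in simp)
    finally show "(\<Prod>p\<in>Small. p ^ multiplicity p ?C) \<le> (2 * N) ^ ?k" .
  next
    have "(\<Prod>p\<in>Large. p ^ multiplicity p ?C) \<le> (\<Prod>p\<in>Large. p ^ 1)"
      using multiplicity_central_binomial_le_one[OF _ N]
      by (intro prod_mono conjI power_increasing)
        (auto simp: Large_def not_le in_prime_factors_iff prime_gt_0_nat Suc_leI)
    also have "\<dots> \<le> \<Prod>{p. prime p \<and> p \<le> n}"
    proof (rule dvd_imp_le)
      show "(\<Prod>p\<in>Large. p ^ 1) dvd \<Prod>{p. prime p \<and> p \<le> n}"
        using factors unfolding Large_def by (simp, intro prod_dvd_prod_subset finite_primes_le) auto
    qed (simp add: prod_pos prime_gt_0_nat)
    also have "\<dots> \<le> 4 ^ n"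
      by (rule primorial_le_four_power)
    finally show "(\<Prod>p\<in>Large. p ^ multiplicity p ?C) \<le> 4 ^ n" .
  qed
  finally show ?thesis .
qed

lemma four_power_le_central_binomial: "(4::nat) ^ N \<le> (2 * N + 1) * ((2 * N) choose N)"
proof -
  have "(4::nat) ^ N = (\<Sum>k\<le>2 * N. (2 * N) choose k)"
    by (simp add: choose_row_sum power_mult)
  also have "\<dots> \<le> (\<Sum>k\<le>2 * N. (2 * N) choose N)"
    by (intro sum_mono binomial_maximum')
  also have "\<dots> = (2 * N + 1) * ((2 * N) choose N)"
    by simp
  finally show ?thesis .
qed

lemma weak_bertrand_log_estimate:
  fixes y k :: real
  assumes y: "y \<ge> 32" and k: "k \<le> y ^ 2"
  shows "ln (y ^ 4 + 1) + k * ln (y ^ 4) + y ^ 4 / 2 ^ 20 * ln 4 < y ^ 4 * ln 2"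
proof -
  have ln2: "1 / 2 \<le> ln (2 :: real)"
    using ln_le_minus_one[of "1 / 2"] by (simp add: ln_div)
  have lnX: "ln (y ^ 4) \<le> 4 * y"
    using ln_realpow[of y 4] ln_le_minus_one[of y] y by simp
  have y4: "1 \<le> y ^ 4"
    using y by (simp add: one_le_power)
  then have "ln (y ^ 4 + 1) \<le> ln (2 * y ^ 4)"
    by (subst ln_le_cancel_iff) auto
  also have "\<dots> \<le> 1 + 4 * y"
    using y4 lnX ln_le_minus_one[of 2] by (simp add: ln_mult)
  finally have lnX1: "ln (y ^ 4 + 1) \<le> 1 + 4 * y" .
  have "k * ln (y ^ 4) \<le> y ^ 2 * (4 * y)"
    using k lnX y by (intro mult_mono) auto
  then have lnXk: "k * ln (y ^ 4) \<le> 4 * y ^ 3"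
    by (simp add: power_numeral_reduce algebra_simps)
  have "y ^ 4 \<ge> 32 * y ^ 3" and "y ^ 3 \<ge> 32 * y ^ 2" and "y ^ 2 \<ge> 32 * y"
    using y by (simp_all add: power_numeral_reduce mult_right_mono)
  moreover have "y ^ 4 / 2 \<le> y ^ 4 * ln 2"
    using ln2 y by (simp add: mult_left_mono)
  moreover have "y ^ 4 / 2 ^ 20 * ln 4 = y ^ 4 * ln 2 / 524288"
    by (simp add: ln_realpow[of 2 2, simplified])
  ultimately show ?thesis
    using lnX1 lnXk y by linarith
qed

lemma weak_bertrand_estimate:
  fixes n k :: nat
  assumes n: "n \<ge> 1" and k: "real k \<le> sqrt (2 ^ 20 * n)"
  shows "(2 ^ 20 * n + 1) * (2 ^ 20 * n) ^ k * 4 ^ n < (2 :: nat) ^ (2 ^ 20 * n)"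
proof -
  define X where "X = real (2 ^ 20 * n)"
  define y where "y = sqrt (sqrt X)"
  have X: "X \<ge> 2 ^ 20"
    using n unfolding X_def by simp
  have y2: "y ^ 2 = sqrt X"
    using X by (simp add: y_def)
  have y4: "y ^ 4 = X"
    using y2 X by (metis power_mult num_double numeral_times_numeral real_sqrt_pow2 order_trans
        zero_le_numeral zero_le_power)
  have "y \<ge> 32"
  proof -
    have "(32 :: real) ^ 4 \<le> y ^ 4"
      using y4 X by simp
    moreover have "y \<ge> 0"
      using X unfolding y_def by simp
    ultimately show ?thesis
      using power_mono_iff[of 32 y 4] by simp
  qed
  then have "ln (X + 1) + real k * ln X + real n * ln 4 < X * ln 2"
    using weak_bertrand_log_estimate[of y k] k y2 y4 unfolding X_def by simp
  moreover have "ln ((X + 1) * X ^ k * 4 ^ n) = ln (X + 1) + real k * ln X + real n * ln 4"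
    using X by (simp add: ln_mult ln_realpow)
  moreover have "ln (2 ^ (2 ^ 20 * n)) = X * ln 2"
    by (simp add: ln_realpow X_def)
  ultimately have "ln ((X + 1) * X ^ k * 4 ^ n) < ln (2 ^ (2 ^ 20 * n))"
    by simp
  then have "(X + 1) * X ^ k * 4 ^ n < 2 ^ (2 ^ 20 * n)"
    using X by (subst (asm) ln_less_cancel_iff) auto
  then have "real ((2 ^ 20 * n + 1) * (2 ^ 20 * n) ^ k * 4 ^ n) < real ((2 :: nat) ^ (2 ^ 20 * n))"
    unfolding X_def by (simp only: of_nat_mult of_nat_add of_nat_power of_nat_numeral of_nat_1)
  then show ?thesis
    by (rule of_nat_less_imp_less)
qed

theorem weak_bertrand:
  fixes n :: nat
  assumes n: "n \<ge> 1"
  shows "\<exists>p. prime p \<and> n < p \<and> p \<le> 2 ^ 20 * n"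
proof (rule ccontr)
  assume no_prime: "\<not> ?thesis"
  define N where "N = 2 ^ 19 * n"
  have X: "2 * N = 2 ^ 20 * n"
    unfolding N_def by simp
  have "p \<le> n" if "p \<in> prime_factors ((2 * N) choose N)" for p
  proof -
    have "fact (2 * N) = ((2 * N) choose N) * (fact N * (fact N :: nat))"
      using binomial_fact_lemma[of N "2 * N"] by (simp add: algebra_simps mult_2)
    moreover have p: "prime p" "p dvd (2 * N) choose N"
      using that by auto
    ultimately have "p dvd (fact (2 * N) :: nat)"
      by simp
    then have "p \<le> 2 ^ 20 * n"
      using prime_dvd_fact_iff[OF p(1)] X by simp
    then show "p \<le> n"
      using no_prime p(1) by (meson not_le)
  qed
  then have "(2 * N) choose N \<le> (2 * N) ^ nat \<lfloor>sqrt (2 * N)\<rfloor> * 4 ^ n"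
    using n unfolding N_def by (intro central_binomial_le_if_prime_factors_le) auto
  then have "(2 * N + 1) * ((2 * N) choose N) \<le> (2 * N + 1) * (2 * N) ^ nat \<lfloor>sqrt (2 * N)\<rfloor> * 4 ^ n"
    by (metis mult.assoc mult_le_mono2)
  also have "\<dots> < 2 ^ (2 * N)"
    unfolding X using n by (intro weak_bertrand_estimate) auto
  also have "\<dots> = 4 ^ N"
    by (simp add: power_mult)
  finally show False
    using four_power_le_central_binomial[of N] by simp
qed

section \<open>Polynomial codes modulo a prime\<close>

lemma roots_mod_prime_synthetic_div:
  fixes P :: "int poly" and p :: nat
  assumes p: "prime p" and a0: "a0 < p" "int p dvd poly P (int a0)"
  shows "{a \<in> {0..<p}. int p dvd poly P (int a)}
    \<subseteq> insert a0 {a \<in> {0..<p}. int p dvd poly (synthetic_div P (int a0)) (int a)}"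
proof
  fix a assume a: "a \<in> {a \<in> {0..<p}. int p dvd poly P (int a)}"
  define Q where "Q = synthetic_div P (int a0)"
  have P_eq: "P = [:- int a0, 1:] * Q + [:poly P (int a0):]"
    unfolding Q_def by (rule synthetic_div_correct'[symmetric])
  have "poly P (int a) = (int a - int a0) * poly Q (int a) + poly P (int a0)"
    by (subst P_eq) (simp add: algebra_simps)
  then have "(int a - int a0) * poly Q (int a) = poly P (int a) - poly P (int a0)"
    by simp
  moreover have "int p dvd poly P (int a) - poly P (int a0)"
    using a a0(2) by (intro dvd_diff) auto
  ultimately have "int p dvd (int a - int a0) * poly Q (int a)"
    by simp
  moreover have "prime (int p)"
    using p by simp
  ultimately have "int p dvd int a - int a0 \<or> int p dvd poly Q (int a)"
    using prime_dvd_mult_iff by blast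
  moreover have "a = a0" if "int p dvd int a - int a0"
  proof -
    have "int a mod int p = int a0 mod int p"
      using that by (simp add: mod_eq_dvd_iff)
    then show ?thesis
      using a a0 by simp
  qed
  ultimately show "a \<in> insert a0 {a \<in> {0..<p}. int p dvd poly (synthetic_div P (int a0)) (int a)}"
    using a unfolding Q_def by auto
qed

lemma card_roots_mod_prime_le_degree:
  fixes P :: "int poly" and p :: nat
  assumes p: "prime p" and not_dvd: "\<not> [:int p:] dvd P"
  shows "card {a \<in> {0..<p}. int p dvd poly P (int a)} \<le> degree P"
  using not_dvd
proof (induction "degree P" arbitrary: P rule: less_induct)
  case less
  let ?roots = "\<lambda>P. {a \<in> {0..<p}. int p dvd poly P (int a)}"
  show ?case
  proof (cases "?roots P = {}")
    case True
    then show ?thesis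
      by (simp only: card.empty)
  next
    case False
    then obtain a0 where a0: "a0 < p" "int p dvd poly P (int a0)"
      by auto
    let ?Q = "synthetic_div P (int a0)"
    have P_eq: "P = [:- int a0, 1:] * ?Q + [:poly P (int a0):]"
      by (rule synthetic_div_correct'[symmetric])
    have "degree P \<noteq> 0"
    proof
      assume "degree P = 0"
      then have P0: "[:coeff P 0:] = P"
        by (rule degree_0_id)
      have "poly [:coeff P 0:] (int a0) = coeff P 0"
        by simp
      then have "int p dvd coeff P 0"
        using a0(2) P0 by simp
      then have "[:int p:] dvd [:coeff P 0:]"
        by simp
      then show False
        using less.prems P0 by simp
    qed
    then have deg_Q: "degree ?Q < degree P"
      by (simp add: degree_synthetic_div)
    have "\<not> [:int p:] dvd ?Q"
    proof
      assume "[:int p:] dvd ?Q"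
      then have "[:int p:] dvd [:- int a0, 1:] * ?Q + [:poly P (int a0):]"
        using a0(2) by (intro dvd_add dvd_mult) simp_all
      then show False
        using less.prems P_eq by simp
    qed
    then have "card (?roots ?Q) \<le> degree ?Q"
      using less.hyps[OF deg_Q] by blast
    moreover have "card (?roots P) \<le> card (insert a0 (?roots ?Q))"
      by (rule card_mono[OF _ roots_mod_prime_synthetic_div[OF p a0]]) simp
    moreover have "card (insert a0 (?roots ?Q)) \<le> Suc (card (?roots ?Q))"
      by (rule card_insert_le_m1) simp_all
    ultimately show ?thesis
      using deg_Q by simp
  qed
qed

definition digit :: "nat \<Rightarrow> nat \<Rightarrow> nat \<Rightarrow> nat" where
  "digit q x i = x div q ^ i mod q"

definition digit_poly :: "nat \<Rightarrow> nat \<Rightarrow> nat \<Rightarrow> int poly" where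
  "digit_poly q d x = (\<Sum>i\<le>d. monom (int (digit q x i)) i)"

definition codeword :: "nat \<Rightarrow> nat \<Rightarrow> nat \<Rightarrow> nat \<Rightarrow> nat" where
  "codeword q d x a = (\<Sum>i\<le>d. digit q x i * a ^ i) mod q"

lemma codeword_less: "q > 0 \<Longrightarrow> codeword q d x a < q"
  unfolding codeword_def by simp

lemma codeword_eq_iff:
  "codeword q d x a = codeword q d y a \<longleftrightarrow> int q dvd poly (digit_poly q d x - digit_poly q d y) (int a)"
proof -
  let ?A = "\<Sum>i\<le>d. digit q x i * a ^ i" and ?B = "\<Sum>i\<le>d. digit q y i * a ^ i"
  have "codeword q d x a = codeword q d y a \<longleftrightarrow> int ?A mod int q = int ?B mod int q"
    unfolding codeword_def by (simp only: of_nat_mod[symmetric] of_nat_eq_iff)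
  also have "\<dots> \<longleftrightarrow> int q dvd int ?A - int ?B"
    by (rule mod_eq_dvd_iff)
  also have "int ?A - int ?B = poly (digit_poly q d x - digit_poly q d y) (int a)"
    by (simp add: digit_poly_def poly_sum poly_monom)
  finally show ?thesis .
qed

lemma digit_Suc: "digit q x (Suc i) = digit q (x div q) i"
  unfolding digit_def by (simp add: div_mult2_eq)

lemma eq_if_digits_eq:
  assumes q: "q > 0" and "x < q ^ Suc d" "y < q ^ Suc d" and "\<forall>i\<le>d. digit q x i = digit q y i"
  shows "x = y"
  using assms(2-4)
proof (induction d arbitrary: x y)
  case 0
  then show ?case
    using q by (simp add: digit_def)
next
  case (Suc d)
  have "x div q < q ^ Suc d" "y div q < q ^ Suc d"
    using Suc.prems(1,2) q by (simp_all add: div_less_iff_less_mult mult.commute)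
  moreover have "\<forall>i\<le>d. digit q (x div q) i = digit q (y div q) i"
    using Suc.prems(3) by (metis Suc_le_mono digit_Suc)
  ultimately have "x div q = y div q"
    using Suc.IH by blast
  moreover have "x mod q = y mod q"
    using Suc.prems(3)[rule_format, of 0] by (simp add: digit_def)
  ultimately show ?case
    by (metis div_mult_mod_eq)
qed

lemma card_codeword_agree_le:
  assumes q: "prime q" and "x \<noteq> y" "x < q ^ Suc d" "y < q ^ Suc d"
  shows "card {a \<in> {0..<q}. codeword q d x a = codeword q d y a} \<le> d"
proof -
  have q0: "q > 0"
    using q prime_gt_0_nat by blast
  obtain i where i: "i \<le> d" "digit q x i \<noteq> digit q y i"
    using eq_if_digits_eq[OF q0 assms(3,4)] assms(2) by blast
  let ?D = "digit_poly q d x - digit_poly q d y"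
  have coeff_D: "coeff ?D i = int (digit q x i) - int (digit q y i)"
    using i by (simp add: digit_poly_def coeff_sum coeff_monom)
  have "\<not> int q dvd coeff ?D i"
  proof
    assume "int q dvd coeff ?D i"
    moreover have "coeff ?D i \<noteq> 0"
      using coeff_D i by simp
    ultimately have "\<bar>int q\<bar> \<le> \<bar>coeff ?D i\<bar>"
      by (rule dvd_imp_le_int[rotated])
    moreover have "digit q x i < q" "digit q y i < q"
      using q0 by (simp_all add: digit_def)
    ultimately show False
      using coeff_D by linarith
  qed
  then have "\<not> [:int q:] dvd ?D"
    unfolding const_poly_dvd_iff by blast
  moreover have "degree ?D \<le> d"
    by (rule degree_le) (simp add: digit_poly_def coeff_sum coeff_monom)
  moreover have "{a \<in> {0..<q}. codeword q d x a = codeword q d y a}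
      = {a \<in> {0..<q}. int q dvd poly ?D (int a)}"
    by (simp only: codeword_eq_iff)
  ultimately show ?thesis
    using card_roots_mod_prime_le_degree[OF q, of ?D] by simp
qed

section \<open>One round of weighted colour reduction\<close>

lemma weighted_graph_nonneg: "weighted_graph n w \<Longrightarrow> 0 \<le> w u v"
  unfolding weighted_graph_def by blast

lemma wdeg_nonneg: "weighted_graph n w \<Longrightarrow> 0 \<le> wdeg n w v"
  unfolding wdeg_def using weighted_graph_nonneg by (simp add: sum_nonneg)

text \<open>
  A vertex with colour x, edge weights r and neighbour colours col moves to the colour encoding
  the pair (a, codeword q d x a), where a is an evaluation point at which the differently
  coloured neighbours with the same codeword carry at most a d/q fraction of its weighted degree.
\<close>

definition collision_weight ::
  "nat \<Rightarrow> (nat \<Rightarrow> real) \<Rightarrow> (nat \<Rightarrow> nat) \<Rightarrow> nat \<Rightarrow> nat \<Rightarrow> nat \<Rightarrow> nat \<Rightarrow> real" where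
  "collision_weight n r col x q d a =
     (\<Sum>u\<in>{1..n}. if col u \<noteq> x \<and> codeword q d (col u) a = codeword q d x a then r u else 0)"

definition good_point :: "nat \<Rightarrow> (nat \<Rightarrow> real) \<Rightarrow> (nat \<Rightarrow> nat) \<Rightarrow> nat \<Rightarrow> nat \<Rightarrow> nat \<Rightarrow> nat" where
  "good_point n r col x q d =
     (SOME a. a < q \<and> real q * collision_weight n r col x q d a \<le> real d * (\<Sum>u\<in>{1..n}. r u))"

definition reduce_color :: "nat \<Rightarrow> (nat \<Rightarrow> real) \<Rightarrow> (nat \<Rightarrow> nat) \<Rightarrow> nat \<Rightarrow> nat \<Rightarrow> nat \<Rightarrow> nat" where
  "reduce_color n r col x q d =
     good_point n r col x q d * q + codeword q d x (good_point n r col x q d)"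

lemma reduce_color_cong:
  assumes "\<forall>u\<in>{1..n}. r u = r' u" and "\<forall>u\<in>{1..n}. r u \<noteq> 0 \<longrightarrow> col u = col' u"
  shows "reduce_color n r col x q d = reduce_color n r' col' x q d"
proof -
  have "collision_weight n r col x q d a = collision_weight n r' col' x q d a" for a
    unfolding collision_weight_def using assms by (intro sum.cong) auto
  moreover have "(\<Sum>u\<in>{1..n}. r u) = (\<Sum>u\<in>{1..n}. r' u)"
    using assms by (intro sum.cong) auto
  ultimately show ?thesis
    unfolding reduce_color_def good_point_def by simp
qed

lemma good_point_exists:
  assumes q: "prime q" and col: "\<forall>u\<in>{1..n}. col u < q ^ Suc d" "x < q ^ Suc d"
    and r: "\<forall>u. 0 \<le> r u"
  shows "\<exists>a. a < q \<and> real q * collision_weight n r col x q d a \<le> real d * (\<Sum>u\<in>{1..n}. r u)"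
proof (rule ccontr)
  assume none: "\<not> ?thesis"
  have q0: "q > 0"
    using q prime_gt_0_nat by blast
  let ?W = "\<Sum>u\<in>{1..n}. r u"
  let ?agree = "\<lambda>u. {a \<in> {0..<q}. codeword q d (col u) a = codeword q d x a}"
  have "(\<Sum>a<q. collision_weight n r col x q d a)
      = (\<Sum>u\<in>{1..n}. \<Sum>a<q. if col u \<noteq> x \<and> codeword q d (col u) a = codeword q d x a then r u else 0)"
    unfolding collision_weight_def by (rule sum.swap)
  also have "\<dots> \<le> (\<Sum>u\<in>{1..n}. real d * r u)"
  proof (rule sum_mono)
    fix u assume u: "u \<in> {1..n}"
    show "(\<Sum>a<q. if col u \<noteq> x \<and> codeword q d (col u) a = codeword q d x a then r u else 0) \<le> real d * r u"
    proof (cases "col u = x")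
      case True
      then show ?thesis
        using r by simp
    next
      case False
      then have "(\<Sum>a<q. if col u \<noteq> x \<and> codeword q d (col u) a = codeword q d x a then r u else 0)
          = real (card (?agree u)) * r u"
        by (simp add: sum.If_cases lessThan_atLeast0 Int_def)
      also have "\<dots> \<le> real d * r u"
        using card_codeword_agree_le[OF q False col(1)[rule_format, OF u] col(2)] r
        by (intro mult_right_mono) auto
      finally show ?thesis .
    qed
  qed
  also have "\<dots> = real d * ?W"
    by (simp add: sum_distrib_left)
  finally have le: "(\<Sum>a<q. collision_weight n r col x q d a) \<le> real d * ?W" .
  have "(\<Sum>a<q. real d * ?W) < (\<Sum>a<q. real q * collision_weight n r col x q d a)"
    using none q0 by (intro sum_strict_mono) (auto simp: not_le)
  then have "real q * (real d * ?W) < real q * (\<Sum>a<q. collision_weight n r col x q d a)"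
    by (simp add: sum_distrib_left)
  then show False
    using le q0 by simp
qed

lemma good_point_spec:
  assumes "prime q" "\<forall>u\<in>{1..n}. col u < q ^ Suc d" "x < q ^ Suc d" "\<forall>u. 0 \<le> r u"
  shows "good_point n r col x q d < q"
    and "real q * collision_weight n r col x q d (good_point n r col x q d) \<le> real d * (\<Sum>u\<in>{1..n}. r u)"
  using someI_ex[OF good_point_exists[OF assms]] unfolding good_point_def by blast+

lemma reduce_color_less:
  assumes "prime q" "\<forall>u\<in>{1..n}. col u < q ^ Suc d" "x < q ^ Suc d" "\<forall>u. 0 \<le> r u"
  shows "reduce_color n r col x q d < q * q"
proof -
  have q0: "q > 0"
    using assms(1) prime_gt_0_nat by blast
  have "Suc (good_point n r col x q d) * q \<le> q * q"
    using good_point_spec(1)[OF assms] by (intro mult_le_mono1) simp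
  moreover have "codeword q d x (good_point n r col x q d) < q"
    using codeword_less[OF q0] .
  ultimately show ?thesis
    unfolding reduce_color_def by simp
qed

lemma reduce_color_eq_imp:
  assumes q: "q > 0" and eq: "reduce_color n r col x q d = reduce_color n r' col' x' q d"
  shows "good_point n r col x q d = good_point n r' col' x' q d"
    and "codeword q d x (good_point n r col x q d) = codeword q d x' (good_point n r' col' x' q d)"
proof -
  let ?a = "good_point n r col x q d" and ?a' = "good_point n r' col' x' q d"
  have "reduce_color n r col x q d div q = ?a" "reduce_color n r' col' x' q d div q = ?a'"
    "reduce_color n r col x q d mod q = codeword q d x ?a"
    "reduce_color n r' col' x' q d mod q = codeword q d x' ?a'"
    unfolding reduce_color_def using codeword_less[OF q, of d x ?a] codeword_less[OF q, of d x' ?a'] q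
    by simp_all
  then show "?a = ?a'" and "codeword q d x ?a = codeword q d x' ?a'"
    using eq by metis+
qed

lemma wdefect_reduce_color_le:
  assumes w: "weighted_graph n w" and q: "prime q"
    and col: "\<forall>u\<in>{1..n}. col u < q ^ Suc d" and v: "v \<in> {1..n}"
  shows "wdefect n w (\<lambda>u. reduce_color n (w u) col (col u) q d) v
    \<le> wdefect n w col v + real d / real q * wdeg n w v"
proof -
  let ?new = "\<lambda>u. reduce_color n (w u) col (col u) q d"
  let ?a = "\<lambda>u. good_point n (w u) col (col u) q d"
  have q0: "q > 0"
    using q prime_gt_0_nat by blast
  have r: "\<forall>u. 0 \<le> w v u"
    using w weighted_graph_nonneg by blast
  have "(if ?new u = ?new v then w v u else 0)
     \<le> (if col u = col v then w v u else 0)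
       + (if col u \<noteq> col v \<and> codeword q d (col u) (?a v) = codeword q d (col v) (?a v) then w v u else 0)"
    for u
  proof (cases "?new u = ?new v")
    case True
    then have "codeword q d (col u) (?a v) = codeword q d (col v) (?a v)"
      using reduce_color_eq_imp[OF q0 True] by simp
    then show ?thesis
      using r by auto
  qed (use r in auto)
  then have "wdefect n w ?new v
      \<le> (\<Sum>u\<in>{1..n}. (if col u = col v then w v u else 0)
        + (if col u \<noteq> col v \<and> codeword q d (col u) (?a v) = codeword q d (col v) (?a v) then w v u else 0))"
    unfolding wdefect_def sum.inter_filter[OF finite_atLeastAtMost] by (rule sum_mono)
  also have "\<dots> = wdefect n w col v + collision_weight n (w v) col (col v) q d (?a v)"
    unfolding wdefect_def collision_weight_def sum.inter_filter[OF finite_atLeastAtMost]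
    by (rule sum.distrib)
  also have "collision_weight n (w v) col (col v) q d (?a v) \<le> real d / real q * wdeg n w v"
    using good_point_spec(2)[OF q col col[rule_format, OF v] r] q0 unfolding wdeg_def
    by (simp add: field_simps)
  finally show ?thesis by simp
qed

section \<open>Bit lengths and iterated logarithms\<close>

lemma ceillog2_leI: "k \<le> 2 ^ j \<Longrightarrow> ceillog2 k \<le> j"
  by (cases "k = 0") (simp_all add: ceillog2_le_iff)

lemma ceillog2_ge_one: "2 \<le> k \<Longrightarrow> 1 \<le> ceillog2 k"
  by (simp add: ceillog2_ge_iff)

lemma two_power_ceillog2_pred_less: "1 \<le> ceillog2 k \<Longrightarrow> 2 ^ (ceillog2 k - 1) < k"
proof -
  assume pos: "1 \<le> ceillog2 k"
  then have "k > 0"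
    by (metis ceillog2_0 not_gr0 not_one_le_zero)
  then have "2 * 2 ^ (ceillog2 k - 1) < 2 * k"
    using two_power_ceillog2_gt[of k] pos by (simp flip: power_Suc)
  then show ?thesis by simp
qed

lemma add_mult_ceillog2_le:
  fixes a c k b :: nat
  assumes b: "2 ^ k \<le> b" and base: "a + c * (k + 1) \<le> 2 ^ k"
  shows "a + c * ceillog2 b \<le> b"
proof -
  let ?m = "ceillog2 b"
  have "2 ^ k \<le> (2::nat) ^ ?m"
    using b le_two_power_ceillog2[of b] by linarith
  then have km: "k \<le> ?m"
    by simp
  have step: "a + c * j \<le> 2 ^ (j - 1)" if "k + 1 \<le> j" for j
    using that
  proof (induction j rule: dec_induct)
    case base
    then show ?case using assms by simp
  next
    case (step j)
    moreover have "c \<le> c * j"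
      using step by simp
    ultimately have "c \<le> 2 ^ (j - 1)"
      by linarith
    moreover have "(2::nat) ^ (Suc j - 1) = 2 * 2 ^ (j - 1)"
      using step by (cases j) auto
    ultimately show ?case
      using step.IH by simp
  qed
  show ?thesis
  proof (cases "?m = k")
    case True
    then show ?thesis
      using b base by simp
  next
    case False
    then have "a + c * ?m \<le> 2 ^ (?m - 1)"
      using km by (intro step) simp
    also have "\<dots> < b"
      using km False by (intro two_power_ceillog2_pred_less) simp
    finally show ?thesis by simp
  qed
qed

lemma sq_le_two_power_ceillog2:
  fixes q b L :: nat
  assumes "q \<le> 2 ^ 20 * (4 * b * b * L)"
  shows "q * q \<le> 2 ^ (44 + 4 * ceillog2 b + 2 * ceillog2 L)"
proof -
  let ?e = "22 + 2 * ceillog2 b + ceillog2 L"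
  have "q \<le> 2 ^ 22 * (b * b * L)"
    using assms by simp
  also have "\<dots> \<le> 2 ^ 22 * (2 ^ ceillog2 b * 2 ^ ceillog2 b * 2 ^ ceillog2 L)"
    using le_two_power_ceillog2[of b] le_two_power_ceillog2[of L] by (intro mult_le_mono2 mult_le_mono)
  also have "\<dots> = 2 ^ ?e"
    by (simp only: power_add mult_2 mult.assoc)
  finally have q_le: "q \<le> 2 ^ ?e" .
  have "q * q \<le> 2 ^ ?e * 2 ^ ?e"
    using mult_le_mono[OF q_le q_le] .
  also have "\<dots> = 2 ^ (44 + 4 * ceillog2 b + 2 * ceillog2 L)"
    by (simp only: power_add[symmetric]) simp
  finally show ?thesis .
qed

definition log_shrink :: "nat \<Rightarrow> nat" where
  "log_shrink b = 44 + 6 * ceillog2 b"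

lemma log_shrink_mono: "a \<le> b \<Longrightarrow> log_shrink a \<le> log_shrink b"
  unfolding log_shrink_def using ceillog2_mono by simp

lemma log_shrink_le: "1024 \<le> b \<Longrightarrow> log_shrink b \<le> b"
  unfolding log_shrink_def using add_mult_ceillog2_le[of 10 b 44 6] by simp

lemma log_shrink_twice_le: "real (log_shrink (log_shrink b)) \<le> max 1024 (log 2 (real b))"
proof (cases "256 \<le> ceillog2 b")
  case True
  let ?y = "ceillog2 b"
  have "log_shrink b \<le> 2 ^ 3 * 2 ^ ceillog2 ?y"
    using True le_two_power_ceillog2[of ?y] unfolding log_shrink_def by simp
  then have "ceillog2 (log_shrink b) \<le> 3 + ceillog2 ?y"
    by (intro ceillog2_leI) (simp add: power_add)
  then have "log_shrink (log_shrink b) \<le> 62 + 6 * ceillog2 ?y"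
    unfolding log_shrink_def[of "log_shrink b"] by simp
  also have "\<dots> < ?y"
    using add_mult_ceillog2_le[of 8 ?y 63 6] True by simp
  finally have "real (log_shrink (log_shrink b)) + 1 \<le> real ?y"
    by linarith
  moreover have "b > 0"
    using True by (metis ceillog2_0 gr0I not_numeral_le_zero)
  ultimately show ?thesis
    using ceillog2_less_log[of b] by simp
next
  case False
  then have "log_shrink b \<le> 2 ^ 11"
    unfolding log_shrink_def by simp
  then have "ceillog2 (log_shrink b) \<le> 11"
    by (rule ceillog2_leI)
  then have "log_shrink (log_shrink b) \<le> 110"
    unfolding log_shrink_def[of "log_shrink b"] by simp
  then show ?thesis by simp
qed

definition iter_log :: "nat \<Rightarrow> nat \<Rightarrow> real" where
  "iter_log n i = ((\<lambda>x. log 2 x) ^^ i) (real n)"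

lemma iter_log_Suc: "iter_log n (Suc i) = log 2 (iter_log n i)"
  unfolding iter_log_def by simp

lemma iter_log_le_minus:
  "(\<exists>j\<le>i. iter_log n j \<le> 1) \<or> (0 < iter_log n i \<and> iter_log n i \<le> real n - real i)"
proof (induction i)
  case 0
  then show ?case
    unfolding iter_log_def by (cases "n = 0") auto
next
  case (Suc i)
  show ?case
  proof (cases "\<exists>j\<le>i. iter_log n j \<le> 1")
    case True
    then show ?thesis
      using le_SucI by blast
  next
    case False
    then have gt1: "1 < iter_log n i"
      by auto
    have le: "iter_log n i \<le> real n - real i"
      using Suc.IH False by blast
    define m where "m = n - i"
    have m: "real m = real n - real i" "1 \<le> m"
      using gt1 le unfolding m_def by auto
    have "iter_log n (Suc i) \<le> log 2 (real m)"
      unfolding iter_log_Suc using gt1 le m by simp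
    also have "\<dots> \<le> real (ceillog2 m)"
      using ceillog2_ge_log[of m] m by simp
    also have "ceillog2 m \<le> m - 1"
      using less_exp[of "m - 1"] m by (intro ceillog2_leI) linarith
    finally have "iter_log n (Suc i) \<le> real n - real (Suc i)"
      using m by simp
    moreover have "0 < iter_log n (Suc i)"
      unfolding iter_log_Suc using gt1 by simp
    ultimately show ?thesis by blast
  qed
qed

lemma iter_log_log_star: "iter_log n (log_star n) \<le> 1"
proof -
  have "\<exists>i. iter_log n i \<le> 1"
    using iter_log_le_minus[of n n] by auto
  then show ?thesis
    unfolding log_star_def iter_log_def[symmetric] by (rule LeastI_ex)
qed

section \<open>The schedule of rounds\<close>

definition inv_eps :: "real \<Rightarrow> nat" where
  "inv_eps \<epsilon> = nat \<lceil>1 / \<epsilon>\<rceil>"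

lemma inv_eps_bounds:
  assumes "0 < \<epsilon>" "\<epsilon> < 1"
  shows "2 \<le> inv_eps \<epsilon>" "1 / \<epsilon> \<le> real (inv_eps \<epsilon>)" "real (inv_eps \<epsilon>) < 2 / \<epsilon>"
proof -
  have gt1: "1 < 1 / \<epsilon>"
    using assms by simp
  then have eq: "real (inv_eps \<epsilon>) = real_of_int \<lceil>1 / \<epsilon>\<rceil>"
    unfolding inv_eps_def by simp
  show "1 / \<epsilon> \<le> real (inv_eps \<epsilon>)"
    unfolding eq by simp
  show "real (inv_eps \<epsilon>) < 2 / \<epsilon>"
    unfolding eq using gt1 by linarith
  show "2 \<le> inv_eps \<epsilon>"
    using gt1 unfolding inv_eps_def by linarith
qed

text \<open>
  In round j the colours have at most bits n \<epsilon> j bits. A shrinking round uses a prime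
  q \<le> 2^22 b^2 L with L = inv_eps \<epsilon>, so the new colours, below q^2, fit into next_bits \<epsilon> b bits.
  In the final round, colours with at most final_bits \<epsilon> bits are read as polynomials of
  degree 1023 over a prime q > 4096 L.
\<close>

definition final_bits :: "real \<Rightarrow> nat" where
  "final_bits \<epsilon> = 1024 * (ceillog2 (inv_eps \<epsilon>) + 1)"

definition next_bits :: "real \<Rightarrow> nat \<Rightarrow> nat" where
  "next_bits \<epsilon> b = 44 + 4 * ceillog2 b + 2 * ceillog2 (inv_eps \<epsilon>)"

lemma final_bits_ge: "1024 \<le> final_bits \<epsilon>"
  unfolding final_bits_def by simp

lemma next_bits_halve:
  assumes "final_bits \<epsilon> < b"
  shows "2 * next_bits \<epsilon> b \<le> b"
proof -
  have "176 + 16 * ceillog2 b \<le> b"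
    using add_mult_ceillog2_le[of 10 b 176 16] assms final_bits_ge[of \<epsilon>] by simp
  moreover have "8 * ceillog2 (inv_eps \<epsilon>) \<le> b"
    using assms unfolding final_bits_def by simp
  ultimately show ?thesis
    unfolding next_bits_def by simp
qed

lemma next_bits_le: "next_bits \<epsilon> b \<le> max (log_shrink b) (final_bits \<epsilon>)"
  using ceillog2_mono[of "inv_eps \<epsilon>" b] ceillog2_mono[of b "inv_eps \<epsilon>"]
  unfolding next_bits_def log_shrink_def final_bits_def by (cases "inv_eps \<epsilon> \<le> b") auto

lemma next_bits_twice_le: "next_bits \<epsilon> (next_bits \<epsilon> b) \<le> max (log_shrink (log_shrink b)) (final_bits \<epsilon>)"
proof -
  have "log_shrink (next_bits \<epsilon> b) \<le> max (log_shrink (log_shrink b)) (log_shrink (final_bits \<epsilon>))"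
    using next_bits_le[of \<epsilon> b] log_shrink_mono by (metis max.absorb_iff1 max_def)
  moreover have "log_shrink (final_bits \<epsilon>) \<le> final_bits \<epsilon>"
    using log_shrink_le[OF final_bits_ge] .
  ultimately show ?thesis
    using next_bits_le[of \<epsilon> "next_bits \<epsilon> b"] by linarith
qed

definition bits :: "nat \<Rightarrow> real \<Rightarrow> nat \<Rightarrow> nat" where
  "bits n \<epsilon> j = (next_bits \<epsilon> ^^ j) (ceillog2 (n + 1))"

lemma bits_0: "bits n \<epsilon> 0 = ceillog2 (n + 1)"
  unfolding bits_def by simp

lemma bits_Suc: "bits n \<epsilon> (Suc j) = next_bits \<epsilon> (bits n \<epsilon> j)"
  unfolding bits_def by simp

lemma bits_ge_one: "1 \<le> n \<Longrightarrow> 1 \<le> bits n \<epsilon> j"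
  using ceillog2_ge_one[of "n + 1"] by (cases j) (simp_all add: bits_0 bits_Suc next_bits_def)

lemma bits_double_le: "real (bits n \<epsilon> (2 * i)) \<le> max (real (final_bits \<epsilon>)) (iter_log n i)"
proof (induction i)
  case 0
  have "ceillog2 (n + 1) \<le> n"
    using Suc_leI[OF less_exp[of n]] by (intro ceillog2_leI) simp
  then show ?case
    by (simp add: bits_0 iter_log_def)
next
  case (Suc i)
  let ?b = "bits n \<epsilon> (2 * i)"
  have eq: "bits n \<epsilon> (2 * Suc i) = next_bits \<epsilon> (next_bits \<epsilon> ?b)"
    by (simp add: bits_Suc[symmetric])
  show ?case
  proof (cases "?b \<le> final_bits \<epsilon>")
    case True
    then have "log_shrink (log_shrink ?b) \<le> final_bits \<epsilon>"
      using log_shrink_le[OF final_bits_ge] log_shrink_mono order_trans by meson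
    then show ?thesis
      unfolding eq using next_bits_twice_le[of \<epsilon> ?b] by simp
  next
    case False
    then have "real ?b \<le> iter_log n i" and "0 < real ?b"
      using Suc.IH by linarith+
    then have "log 2 (real ?b) \<le> iter_log n (Suc i)"
      unfolding iter_log_Suc by simp
    then have "real (log_shrink (log_shrink ?b)) \<le> max 1024 (iter_log n (Suc i))"
      using log_shrink_twice_le[of ?b] by linarith
    then show ?thesis
      unfolding eq using next_bits_twice_le[of \<epsilon> ?b] final_bits_ge[of \<epsilon>] by linarith
  qed
qed

definition shrink_rounds :: "nat \<Rightarrow> real \<Rightarrow> nat" where
  "shrink_rounds n \<epsilon> = (LEAST j. bits n \<epsilon> j \<le> final_bits \<epsilon>)"

lemma bits_double_log_star: "bits n \<epsilon> (2 * log_star n) \<le> final_bits \<epsilon>"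
  using bits_double_le[of n \<epsilon> "log_star n"] iter_log_log_star[of n] final_bits_ge[of \<epsilon>] by linarith

lemma shrink_rounds_le: "shrink_rounds n \<epsilon> \<le> 2 * log_star n"
  unfolding shrink_rounds_def using bits_double_log_star by (rule Least_le)

lemma bits_shrink_rounds: "bits n \<epsilon> (shrink_rounds n \<epsilon>) \<le> final_bits \<epsilon>"
  unfolding shrink_rounds_def using bits_double_log_star by (rule LeastI)

lemma bits_halve: "j < shrink_rounds n \<epsilon> \<Longrightarrow> 2 * bits n \<epsilon> (Suc j) \<le> bits n \<epsilon> j"
  unfolding shrink_rounds_def bits_Suc using not_less_Least next_bits_halve not_le by blast

lemma bits_le_bits_0: "j \<le> shrink_rounds n \<epsilon> \<Longrightarrow> bits n \<epsilon> j \<le> bits n \<epsilon> 0"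
proof (induction j)
  case (Suc j)
  then show ?case
    using bits_halve[of j n \<epsilon>] by simp
qed simp

section \<open>The colouring after t rounds\<close>

definition prime_above :: "nat \<Rightarrow> nat" where
  "prime_above m = (SOME p. prime p \<and> m < p \<and> p \<le> 2 ^ 20 * m)"

lemma prime_above_spec:
  assumes "1 \<le> m"
  shows "prime (prime_above m)" "m < prime_above m" "prime_above m \<le> 2 ^ 20 * m"
  using someI_ex[OF weak_bertrand[OF assms]] unfolding prime_above_def by blast+

definition round_prime :: "nat \<Rightarrow> real \<Rightarrow> nat \<Rightarrow> nat" where
  "round_prime n \<epsilon> j =
     (if j < shrink_rounds n \<epsilon> then prime_above (4 * bits n \<epsilon> j * bits n \<epsilon> j * inv_eps \<epsilon>)
      else prime_above (4096 * inv_eps \<epsilon>))"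

definition round_degree :: "nat \<Rightarrow> real \<Rightarrow> nat \<Rightarrow> nat" where
  "round_degree n \<epsilon> j = (if j < shrink_rounds n \<epsilon> then bits n \<epsilon> j - 1 else 1023)"

primrec coloring :: "nat \<Rightarrow> real \<Rightarrow> (nat \<Rightarrow> nat \<Rightarrow> real) \<Rightarrow> nat \<Rightarrow> nat \<Rightarrow> nat" where
  "coloring n \<epsilon> w 0 = (\<lambda>v. v)"
| "coloring n \<epsilon> w (Suc t) = (\<lambda>v. reduce_color n (w v) (coloring n \<epsilon> w t) (coloring n \<epsilon> w t v)
     (round_prime n \<epsilon> t) (round_degree n \<epsilon> t))"

lemma wdefect_ident:
  assumes "weighted_graph n w" "v \<in> {1..n}"
  shows "wdefect n w (\<lambda>v. v) v = 0"
proof -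
  have "{u \<in> {1..n}. u = v} = {v}"
    using assms by auto
  then show ?thesis
    using assms unfolding wdefect_def weighted_graph_def by simp
qed

lemma coloring_Suc:
  assumes w: "weighted_graph n w" and q: "prime (round_prime n \<epsilon> t)"
    and col: "\<forall>u\<in>{1..n}. coloring n \<epsilon> w t u < round_prime n \<epsilon> t ^ Suc (round_degree n \<epsilon> t)"
    and v: "v \<in> {1..n}"
  shows "coloring n \<epsilon> w (Suc t) v < round_prime n \<epsilon> t * round_prime n \<epsilon> t"
    and "wdefect n w (coloring n \<epsilon> w (Suc t)) v \<le> wdefect n w (coloring n \<epsilon> w t) v
      + real (round_degree n \<epsilon> t) / real (round_prime n \<epsilon> t) * wdeg n w v"
  using reduce_color_less[OF q col col[rule_format, OF v]] weighted_graph_nonneg[OF w]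
    wdefect_reduce_color_le[OF w q col v] by simp_all

lemma shrinking_round:
  assumes n: "1 \<le> n" and \<epsilon>: "0 < \<epsilon>" "\<epsilon> < 1" and j: "j < shrink_rounds n \<epsilon>"
  defines "b \<equiv> bits n \<epsilon> j" and "q \<equiv> round_prime n \<epsilon> j"
  shows "prime q"
    and "2 ^ b \<le> q ^ Suc (round_degree n \<epsilon> j)"
    and "q * q \<le> 2 ^ bits n \<epsilon> (Suc j)"
    and "real (round_degree n \<epsilon> j) / real q \<le> \<epsilon> / (4 * real b)"
proof -
  let ?L = "inv_eps \<epsilon>"
  have b: "1 \<le> b"
    unfolding b_def using bits_ge_one[OF n] .
  then have m: "1 \<le> 4 * b * b * ?L"
    using inv_eps_bounds(1)[OF \<epsilon>] by simp
  have "q = prime_above (4 * b * b * ?L)"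
    unfolding q_def b_def round_prime_def using j by simp
  then have q: "prime q" "4 * b * b * ?L < q" "q \<le> 2 ^ 20 * (4 * b * b * ?L)"
    using prime_above_spec[OF m] by simp_all
  have d: "round_degree n \<epsilon> j = b - 1"
    unfolding round_degree_def b_def using j by simp
  show "prime q"
    using q(1) .
  show "2 ^ b \<le> q ^ Suc (round_degree n \<epsilon> j)"
    unfolding d using b prime_ge_2_nat[OF q(1)] by (simp add: power_mono)
  show "q * q \<le> 2 ^ bits n \<epsilon> (Suc j)"
    unfolding bits_Suc next_bits_def b_def[symmetric] using q(3) by (rule sq_le_two_power_ceillog2)
  have "4 * real b * real b / \<epsilon> = 4 * real b * real b * (1 / \<epsilon>)"
    by simp
  also have "\<dots> \<le> 4 * real b * real b * real ?L"
    using inv_eps_bounds(2)[OF \<epsilon>] by (intro mult_left_mono) auto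
  also have "\<dots> < real q"
    using q(2) by (metis of_nat_less_iff of_nat_mult of_nat_numeral)
  finally have "4 * real b * real b < \<epsilon> * real q"
    using \<epsilon> by (simp add: divide_less_eq mult.commute)
  then have "real b / real q \<le> \<epsilon> / (4 * real b)"
    using b prime_gt_0_nat[OF q(1)] by (simp add: field_simps)
  moreover have "real (b - 1) / real q \<le> real b / real q"
    by (intro divide_right_mono) auto
  ultimately show "real (round_degree n \<epsilon> j) / real q \<le> \<epsilon> / (4 * real b)"
    unfolding d by linarith
qed

lemma final_round:
  fixes n :: nat
  assumes \<epsilon>: "0 < \<epsilon>" "\<epsilon> < 1"
  defines "q \<equiv> round_prime n \<epsilon> (shrink_rounds n \<epsilon>)"
  shows "prime q"
    and "2 ^ final_bits \<epsilon> \<le> q ^ Suc (round_degree n \<epsilon> (shrink_rounds n \<epsilon>))"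
    and "q * q \<le> 2 ^ 64 * inv_eps \<epsilon> * inv_eps \<epsilon>"
    and "real (round_degree n \<epsilon> (shrink_rounds n \<epsilon>)) / real q \<le> \<epsilon> / 4"
proof -
  let ?L = "inv_eps \<epsilon>"
  have L: "2 \<le> ?L"
    using inv_eps_bounds(1)[OF \<epsilon>] .
  have "q = prime_above (4096 * ?L)"
    unfolding q_def round_prime_def by simp
  then have q: "prime q" "4096 * ?L < q" "q \<le> 2 ^ 20 * (4096 * ?L)"
    using prime_above_spec[of "4096 * ?L"] L by simp_all
  have d: "round_degree n \<epsilon> (shrink_rounds n \<epsilon>) = 1023"
    unfolding round_degree_def by simp
  show "prime q"
    using q(1) .
  have "2 * 2 ^ ceillog2 ?L < 4 * ?L"
    using two_power_ceillog2_gt[of ?L] L by simp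
  then have "2 ^ (ceillog2 ?L + 1) \<le> q"
    using q(2) by simp
  then have "(2 ^ (ceillog2 ?L + 1)) ^ 1024 \<le> q ^ 1024"
    by (rule power_mono) simp
  moreover have "(2::nat) ^ final_bits \<epsilon> = (2 ^ (ceillog2 ?L + 1)) ^ 1024"
    unfolding final_bits_def by (simp only: power_mult mult.commute)
  ultimately show "2 ^ final_bits \<epsilon> \<le> q ^ Suc (round_degree n \<epsilon> (shrink_rounds n \<epsilon>))"
    unfolding d by simp
  have "q * q \<le> (2 ^ 32 * ?L) * (2 ^ 32 * ?L)"
    using q(3) by (intro mult_le_mono) auto
  then show "q * q \<le> 2 ^ 64 * ?L * ?L"
    by simp
  have "4096 / \<epsilon> \<le> 4096 * real ?L"
    using inv_eps_bounds(2)[OF \<epsilon>] by (simp add: divide_simps)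
  also have "\<dots> < real q"
    using q(2) by linarith
  finally have "4096 < \<epsilon> * real q"
    using \<epsilon> by (simp add: divide_less_eq mult.commute)
  then show "real (round_degree n \<epsilon> (shrink_rounds n \<epsilon>)) / real q \<le> \<epsilon> / 4"
    unfolding d using prime_gt_0_nat[OF q(1)] by (simp add: field_simps)
qed

lemma coloring_invariant:
  assumes w: "weighted_graph n w" and n: "1 \<le> n" and \<epsilon>: "0 < \<epsilon>" "\<epsilon> < 1"
  shows "j \<le> shrink_rounds n \<epsilon> \<Longrightarrow> \<forall>v\<in>{1..n}. coloring n \<epsilon> w j v < 2 ^ bits n \<epsilon> j
    \<and> wdefect n w (coloring n \<epsilon> w j) v \<le> \<epsilon> / (4 * real (bits n \<epsilon> j)) * wdeg n w v"
proof (induction j)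
  case 0
  have "v < 2 ^ bits n \<epsilon> 0" if "v \<in> {1..n}" for v
    using that le_two_power_ceillog2[of "n + 1"] unfolding bits_0 by simp
  then show ?case
    using wdefect_ident[OF w] wdeg_nonneg[OF w] \<epsilon> by simp
next
  case (Suc j)
  let ?b = "bits n \<epsilon> j" and ?b' = "bits n \<epsilon> (Suc j)" and ?q = "round_prime n \<epsilon> j"
  have j: "j < shrink_rounds n \<epsilon>"
    using Suc.prems by simp
  note IH = Suc.IH[OF less_imp_le[OF j]]
  note round = shrinking_round[OF n \<epsilon> j]
  have col: "\<forall>u\<in>{1..n}. coloring n \<epsilon> w j u < ?q ^ Suc (round_degree n \<epsilon> j)"
    using IH round(2) less_le_trans by blast
  show ?case
  proof
    fix v assume v: "v \<in> {1..n}"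
    have small: "coloring n \<epsilon> w (Suc j) v < 2 ^ ?b'"
      using coloring_Suc(1)[OF w round(1) col v] round(3) by linarith
    have deg: "0 \<le> wdeg n w v"
      by (rule wdeg_nonneg[OF w])
    have b: "1 \<le> ?b'" "2 * ?b' \<le> ?b"
      using bits_ge_one[OF n] bits_halve[OF j] by auto
    \<comment> \<open>The round error is within the old budget, and halving the bit length doubles it.\<close>
    have "wdefect n w (coloring n \<epsilon> w (Suc j)) v
        \<le> \<epsilon> / (4 * real ?b) * wdeg n w v + \<epsilon> / (4 * real ?b) * wdeg n w v"
      using coloring_Suc(2)[OF w round(1) col v] IH v mult_right_mono[OF round(4) deg] by fastforce
    also have "\<dots> = \<epsilon> / (2 * real ?b) * wdeg n w v"
      by (simp add: field_simps)
    also have "\<dots> \<le> \<epsilon> / (4 * real ?b') * wdeg n w v"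
      using b \<epsilon> deg by (intro mult_right_mono divide_left_mono) auto
    finally show "coloring n \<epsilon> w (Suc j) v < 2 ^ ?b'
      \<and> wdefect n w (coloring n \<epsilon> w (Suc j)) v \<le> \<epsilon> / (4 * real ?b') * wdeg n w v"
      using small by blast
  qed
qed

lemma coloring_less_square:
  assumes w: "weighted_graph n w" and \<epsilon>: "0 < \<epsilon>" "\<epsilon> < 1"
    and t: "t \<le> shrink_rounds n \<epsilon>" and u: "u \<in> {1..n}"
  shows "coloring n \<epsilon> w t u < (n + 1) ^ 2"
proof -
  have n: "1 \<le> n"
    using u by simp
  have "coloring n \<epsilon> w t u < 2 ^ bits n \<epsilon> t"
    using coloring_invariant[OF w n \<epsilon> t] u by blast
  also have "\<dots> \<le> 2 ^ ceillog2 (n + 1)"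
    using bits_le_bits_0[OF t] unfolding bits_0 by simp
  also have "\<dots> < 2 * (n + 1)"
    by (rule two_power_ceillog2_gt) simp
  also have "\<dots> \<le> (n + 1) ^ 2"
    using n by (simp add: power2_eq_square)
  finally show ?thesis .
qed

lemma coloring_shrink_rounds_less:
  assumes w: "weighted_graph n w" and \<epsilon>: "0 < \<epsilon>" "\<epsilon> < 1" and u: "u \<in> {1..n}"
  shows "coloring n \<epsilon> w (shrink_rounds n \<epsilon>) u
    < round_prime n \<epsilon> (shrink_rounds n \<epsilon>) ^ Suc (round_degree n \<epsilon> (shrink_rounds n \<epsilon>))"
proof -
  have "coloring n \<epsilon> w (shrink_rounds n \<epsilon>) u < 2 ^ bits n \<epsilon> (shrink_rounds n \<epsilon>)"
    using coloring_invariant[OF w _ \<epsilon> order_refl] u by auto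
  also have "\<dots> \<le> 2 ^ final_bits \<epsilon>"
    using bits_shrink_rounds by (intro power_increasing) auto
  also have "\<dots> \<le> round_prime n \<epsilon> (shrink_rounds n \<epsilon>) ^ Suc (round_degree n \<epsilon> (shrink_rounds n \<epsilon>))"
    by (rule final_round(2)[OF \<epsilon>])
  finally show ?thesis .
qed

lemma final_coloring:
  assumes w: "weighted_graph n w" and \<epsilon>: "0 < \<epsilon>" "\<epsilon> < 1" and v: "v \<in> {1..n}"
  defines "\<phi> \<equiv> coloring n \<epsilon> w (Suc (shrink_rounds n \<epsilon>))"
  shows "real (\<phi> v) < 2 ^ 66 / \<epsilon>\<^sup>2" and "wdefect n w \<phi> v \<le> \<epsilon> * wdeg n w v"
proof -
  let ?k = "shrink_rounds n \<epsilon>" and ?L = "inv_eps \<epsilon>"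
  have n: "1 \<le> n"
    using v by simp
  note I = coloring_invariant[OF w n \<epsilon> order_refl]
  note round = final_round[OF \<epsilon>, of n]
  have col: "\<forall>u\<in>{1..n}. coloring n \<epsilon> w ?k u < round_prime n \<epsilon> ?k ^ Suc (round_degree n \<epsilon> ?k)"
    using coloring_shrink_rounds_less[OF w \<epsilon>] by blast
  have "\<phi> v < 2 ^ 64 * ?L * ?L"
    using coloring_Suc(1)[OF w round(1) col v] round(3) unfolding \<phi>_def by linarith
  then have "real (\<phi> v) < real (2 ^ 64 * ?L * ?L)"
    by (simp only: of_nat_less_iff)
  also have "\<dots> = 2 ^ 64 * real ?L * real ?L"
    by simp
  also have "\<dots> \<le> 2 ^ 64 * (2 / \<epsilon>) * (2 / \<epsilon>)"
    using inv_eps_bounds(3)[OF \<epsilon>] \<epsilon> by (intro mult_mono) auto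
  also have "\<dots> = 2 ^ 66 / \<epsilon>\<^sup>2"
    by (simp add: power2_eq_square)
  finally show "real (\<phi> v) < 2 ^ 66 / \<epsilon>\<^sup>2" .
  have deg: "0 \<le> wdeg n w v"
    by (rule wdeg_nonneg[OF w])
  have "\<epsilon> / (4 * real (bits n \<epsilon> ?k)) \<le> \<epsilon> / 4"
    using bits_ge_one[OF n, of \<epsilon> ?k] \<epsilon> by (intro divide_left_mono) auto
  moreover have "wdefect n w (coloring n \<epsilon> w ?k) v \<le> \<epsilon> / (4 * real (bits n \<epsilon> ?k)) * wdeg n w v"
    using I v by blast
  ultimately have "wdefect n w (coloring n \<epsilon> w ?k) v \<le> \<epsilon> / 4 * wdeg n w v"
    using deg by (meson mult_right_mono order_trans)
  then have "wdefect n w \<phi> v \<le> \<epsilon> / 4 * wdeg n w v + \<epsilon> / 4 * wdeg n w v"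
    using coloring_Suc(2)[OF w round(1) col v] mult_right_mono[OF round(4) deg]
    unfolding \<phi>_def by linarith
  also have "\<dots> \<le> \<epsilon> * wdeg n w v"
    using \<epsilon> deg by (simp add: field_simps)
  finally show "wdefect n w \<phi> v \<le> \<epsilon> * wdeg n w v" .
qed

section \<open>Implementation in the CONGEST model\<close>

text \<open>
  The state of v is the list [t, colour of v after t rounds, w v 0, ..., w v n], stored as reals
  because the state type is real list.
\<close>

definition alg_init :: "nat \<Rightarrow> real \<Rightarrow> nat \<Rightarrow> (nat \<Rightarrow> real) \<Rightarrow> real list" where
  "alg_init n \<epsilon> v r = 0 # real v # map r [0..<n + 1]"

definition alg_send :: "nat \<Rightarrow> real \<Rightarrow> real list \<Rightarrow> nat \<Rightarrow> nat" where
  "alg_send n \<epsilon> s u = nat \<lfloor>s ! 1\<rfloor>"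

definition alg_update :: "nat \<Rightarrow> real \<Rightarrow> real list \<Rightarrow> (nat \<Rightarrow> nat) \<Rightarrow> real list" where
  "alg_update n \<epsilon> s m =
     (let t = nat \<lfloor>s ! 0\<rfloor> in
      (s ! 0 + 1) # real (reduce_color n (\<lambda>u. s ! (u + 2)) m (nat \<lfloor>s ! 1\<rfloor>)
        (round_prime n \<epsilon> t) (round_degree n \<epsilon> t)) # drop 2 s)"

definition alg_output :: "nat \<Rightarrow> real \<Rightarrow> real list \<Rightarrow> nat" where
  "alg_output n \<epsilon> s = nat \<lfloor>s ! 1\<rfloor>"

lemma congest_state_alg:
  assumes w: "weighted_graph n w"
  shows "congest_state alg_init alg_send alg_update n \<epsilon> w t v
    = real t # real (coloring n \<epsilon> w t v) # map (w v) [0..<n + 1]"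
proof (induction t arbitrary: v)
  case 0
  then show ?case
    by (simp add: alg_init_def)
next
  case (Suc t)
  let ?S = "congest_state alg_init alg_send alg_update n \<epsilon> w t"
  let ?m = "\<lambda>u. if 0 < w u v then alg_send n \<epsilon> (?S u) v else 0"
  have weight: "?S v ! (u + 2) = w v u" if "u \<in> {1..n}" for u
    using that unfolding Suc.IH by (simp del: upt_Suc)
  have "reduce_color n (\<lambda>u. ?S v ! (u + 2)) ?m (coloring n \<epsilon> w t v) (round_prime n \<epsilon> t) (round_degree n \<epsilon> t)
      = reduce_color n (w v) (coloring n \<epsilon> w t) (coloring n \<epsilon> w t v) (round_prime n \<epsilon> t) (round_degree n \<epsilon> t)"
  proof (rule reduce_color_cong)
    show "\<forall>u\<in>{1..n}. ?S v ! (u + 2) = w v u"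
      using weight by blast
    show "\<forall>u\<in>{1..n}. ?S v ! (u + 2) \<noteq> 0 \<longrightarrow> ?m u = coloring n \<epsilon> w t u"
    proof (intro ballI impI)
      fix u assume "u \<in> {1..n}" and "?S v ! (u + 2) \<noteq> 0"
      then have "0 < w u v"
        using weight w weighted_graph_nonneg[OF w, of v u] unfolding weighted_graph_def
        by (metis less_eq_real_def)
      then show "?m u = coloring n \<epsilon> w t u"
        by (simp add: Suc.IH alg_send_def)
    qed
  qed
  moreover have "?S v ! 0 = real t" "?S v ! 1 = real (coloring n \<epsilon> w t v)"
    "drop 2 (?S v) = map (w v) [0..<n + 1]"
    unfolding Suc.IH by simp_all
  ultimately show ?case
    unfolding congest_state.simps alg_update_def Let_def by simp
qed

lemma alg_message_less:
  assumes w: "weighted_graph n w" and \<epsilon>: "0 < \<epsilon>" "\<epsilon> < 1"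
    and t: "t \<le> shrink_rounds n \<epsilon>" and uv: "0 < w u v"
  shows "alg_send n \<epsilon> (congest_state alg_init alg_send alg_update n \<epsilon> w t u) v < (n + 1) ^ 2"
proof -
  have "u \<in> {1..n}"
    using uv w unfolding weighted_graph_def by (metis less_irrefl)
  then show ?thesis
    using coloring_less_square[OF w \<epsilon> t] by (simp add: congest_state_alg[OF w] alg_send_def)
qed

theorem mainTheorem2:
  shows "\<exists>(Cmsg::nat) (Ccol::real) (Crnd::real).
     \<exists>(init :: nat \<Rightarrow> real \<Rightarrow> nat \<Rightarrow> (nat \<Rightarrow> real) \<Rightarrow> real list)
      (send :: nat \<Rightarrow> real \<Rightarrow> real list \<Rightarrow> nat \<Rightarrow> nat)
      (upd :: nat \<Rightarrow> real \<Rightarrow> real list \<Rightarrow> (nat \<Rightarrow> nat) \<Rightarrow> real list)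
      (out :: nat \<Rightarrow> real \<Rightarrow> real list \<Rightarrow> nat)
      (T :: nat \<Rightarrow> real \<Rightarrow> nat).
     \<forall>(n::nat) (w :: nat \<Rightarrow> nat \<Rightarrow> real) (\<epsilon>::real).
       weighted_graph n w \<and> 0 < \<epsilon> \<and> \<epsilon> < 1 \<longrightarrow>
         real (T n \<epsilon>) \<le> Crnd * (real (log_star n) + 1) \<and>
         (\<forall>t < T n \<epsilon>. \<forall>u v. 0 < w u v \<longrightarrow>
            send n \<epsilon> (congest_state init send upd n \<epsilon> w t u) v < (n + 1) ^ Cmsg) \<and>
         (let \<phi> = (\<lambda>v. out n \<epsilon> (congest_state init send upd n \<epsilon> w (T n \<epsilon>) v)) in
            (\<forall>v\<in>{1..n}. real (\<phi> v) < Ccol / \<epsilon>\<^sup>2) \<and>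
            weighted_defective_coloring n w \<epsilon> \<phi>)"
proof (rule exI[of _ 2], rule exI[of _ "2 ^ 66"], rule exI[of _ 2], rule exI[of _ alg_init],
    rule exI[of _ alg_send], rule exI[of _ alg_update], rule exI[of _ alg_output],
    rule exI[of _ "\<lambda>n \<epsilon>. Suc (shrink_rounds n \<epsilon>)"], intro allI impI)
  fix n :: nat and w :: "nat \<Rightarrow> nat \<Rightarrow> real" and \<epsilon> :: real
  assume "weighted_graph n w \<and> 0 < \<epsilon> \<and> \<epsilon> < 1"
  then have w: "weighted_graph n w" and \<epsilon>: "0 < \<epsilon>" "\<epsilon> < 1"
    by auto
  let ?T = "Suc (shrink_rounds n \<epsilon>)"
  let ?S = "congest_state alg_init alg_send alg_update n \<epsilon> w"
  have "alg_send n \<epsilon> (?S t u) v < (n + 1) ^ 2" if "t < ?T" "0 < w u v" for t u v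
    using alg_message_less[OF w \<epsilon>] that by simp
  moreover have "(\<lambda>v. alg_output n \<epsilon> (?S ?T v)) = coloring n \<epsilon> w ?T"
    unfolding congest_state_alg[OF w] alg_output_def by simp
  ultimately show "real ?T \<le> 2 * (real (log_star n) + 1) \<and>
      (\<forall>t < ?T. \<forall>u v. 0 < w u v \<longrightarrow> alg_send n \<epsilon> (?S t u) v < (n + 1) ^ 2) \<and>
      (let \<phi> = (\<lambda>v. alg_output n \<epsilon> (?S ?T v)) in
        (\<forall>v\<in>{1..n}. real (\<phi> v) < 2 ^ 66 / \<epsilon>\<^sup>2) \<and> weighted_defective_coloring n w \<epsilon> \<phi>)"
    using shrink_rounds_le[of n \<epsilon>] final_coloring[OF w \<epsilon>]
    by (simp add: weighted_defective_coloring_def)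
qed

end
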